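(* Let $q=p^m$ with $p$ an odd prime, $m\ge1$, and $q\equiv 1\pmod 6$. Let $f(x)=x^{q+2}$ on $\mathbb{F}_{q^2}$ and for $b\in\mathbb{F}_{q^2}$ put $\beta(b)=\beta_f(1,\tfrac14 b)$. Then for every $c\in\mathbb{F}_q^*$: $\beta(2c)=3$ if $c^2+1\in C_1$; $\beta(2c)\in\{0,3\}$ if $c^2+1\in C_0$; and $\beta(2c)\in\{0,1,2\}$ if $c^2+1=0$.
   Context: $\beta_f(a,b)$ is the number of $(x,y)\in\mathbb{F}_{q^2}^2$ with $f(x)-f(y)=b$ and $f(x+a)-f(y+a)=b$. $C_0$ (resp. $C_1$) denotes the set of nonzero squares (resp. non-squares) in $\mathbb{F}_q^*$. *)

theory Defs
  imports Main "HOL-Computational_Algebra.Primes" "HOL-Library.Cardinality"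
begin

text \<open>The ambient field is a finite field type 'a of cardinality q^2 (F_{q^2}).
  The subfield F_q is the set of elements fixed by the q-th power Frobenius.\<close>

definition subfield_q :: "nat \<Rightarrow> 'a::field set" where
  "subfield_q q = {x. x ^ q = x}"

definition C0 :: "nat \<Rightarrow> 'a::field set" where
  "C0 q = {x \<in> subfield_q q. x \<noteq> 0 \<and> (\<exists>y \<in> subfield_q q. y ^ 2 = x)}"

definition C1 :: "nat \<Rightarrow> 'a::field set" where
  "C1 q = {x \<in> subfield_q q. x \<noteq> 0 \<and> \<not> (\<exists>y \<in> subfield_q q. y ^ 2 = x)}"

definition beta_f :: "('a::field \<Rightarrow> 'a) \<Rightarrow> 'a \<Rightarrow> 'a \<Rightarrow> nat" where
  "beta_f f a b = card {(x, y). f x - f y = b \<and> f (x + a) - f (y + a) = b}"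

end

(*
  Write x ^ q for the Frobenius involution of F_{q^2} over F_q. Putting x = s - 1/2 and
  y = t - 1/2, the two equations counted by beta_f(1, c/2) become
    2 s^q s + s^2 = 2 t^q t + t^2   and   S s - S t = 2 c,   where S s = 4 s^q s^2 + s^q + 2 s.
  The first forces t = s or t = -s: otherwise a quotient built from s + t and s - t would be
  an element of norm 1 and trace -1, i.e. a primitive cube root of unity outside F_q, which
  cannot exist as q = 1 (mod 3). Since c <> 0, only t = -s is left, so beta(2c) is the number
  of solutions of S s = c. A solution in F_q is a root of 4 s^3 + 3 s = c, a solution outside
  F_q a root of (2 s - c)^2 = c^2 + 1. As (4 s^3 + 3 s)^2 + 1 = (s^2 + 1) (4 s^2 + 1)^2 and
  -3 is a square in F_q, one root s0 of the cubic in F_q makes it split over F_q when c^2 + 1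
  is a nonzero square of F_q (0 or 3 solutions), have a double root when c^2 + 1 = 0 (at most
  2), and have no other root in F_q when c^2 + 1 is a non-square. In the last case, with
  d^2 = c^2 + 1, the roots (c + d)/2 and (c - d)/2 of the quadratic lie outside F_q, and
  Cardano's formula yields s0 from a cube root of c + d taken among the elements of norm -1
  (3 solutions).
*)

theory Submission
  imports Defs "HOL-Number_Theory.Residues"
begin

(* The structure ring_of_type_algebra of HOL-Algebra.Algebraic_Closure_Type; importing that
   theory would make prime denote Divisibility.prime. *)
definition ring_of_field_type :: "'a::field ring" where
  "ring_of_field_type = \<lparr>carrier = UNIV, monoid.mult = (*), one = 1, zero = 0, add = (+)\<rparr>"

lemma field_ring_of_field_type: "field (ring_of_field_type :: 'a::field ring)"
proof -
  have "\<exists>y. x * y = 1" if "x \<noteq> 0" for x :: 'a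
    using that right_inverse by blast
  then show ?thesis
    unfolding ring_of_field_type_def
    by unfold_locales (auto simp: Units_def algebra_simps intro: exI[of _ "- _"])
qed

lemma nat_pow_ring_of_field_type:
  "x [^]\<^bsub>ring_of_field_type\<^esub> (n::nat) = (x::'a::field) ^ n"
  by (induction n) (simp_all add: ring_of_field_type_def)

lemma power_card_minus_one_eq_one:
  fixes x :: "'a::{field,finite}"
  assumes "x \<noteq> 0"
  shows "x ^ (CARD('a) - 1) = 1"
proof -
  let ?G = "mult_of (ring_of_field_type :: 'a ring)"
  have "x [^]\<^bsub>?G\<^esub> order ?G = \<one>\<^bsub>?G\<^esub>"
    by (rule group.pow_order_eq_1[OF field.field_mult_group[OF field_ring_of_field_type]])
      (use assms in \<open>simp add: ring_of_field_type_def\<close>)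
  moreover have "order ?G = CARD('a) - 1"
    by (simp add: order_def ring_of_field_type_def card_Diff_singleton)
  ultimately show ?thesis
    unfolding nat_pow_mult_of nat_pow_ring_of_field_type
    by (simp add: ring_of_field_type_def)
qed

lemma finite_field_power_card:
  fixes x :: "'a::{field,finite}"
  shows "x ^ CARD('a) = x"
proof (cases "x = 0")
  case False
  have "CARD('a) = Suc (CARD('a) - 1)"
    using finite_UNIV_card_ge_0[where ?'a = 'a] by simp
  then show ?thesis
    using power_card_minus_one_eq_one[OF False] by (metis power_Suc2 mult_1_left)
qed (simp add: finite_UNIV_card_ge_0 zero_power)

lemma finite_field_has_generator:
  obtains g :: "'a::{field,finite}" where "g \<noteq> 0" and "\<And>x. x \<noteq> 0 \<Longrightarrow> \<exists>i. x = g ^ i"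
proof -
  have "\<exists>a\<in>carrier (mult_of ring_of_field_type).
          carrier (mult_of (ring_of_field_type :: 'a ring))
            = {a [^]\<^bsub>ring_of_field_type\<^esub> i | i::nat. i \<in> UNIV}"
    by (rule field.finite_field_mult_group_has_gen[OF field_ring_of_field_type])
      (simp add: ring_of_field_type_def)
  then obtain g :: 'a where "g \<noteq> 0" and "UNIV - {0} = {g ^ i | i::nat. i \<in> UNIV}"
    unfolding nat_pow_ring_of_field_type by (auto simp: ring_of_field_type_def)
  then show ?thesis
    by (intro that[of g]) blast+
qed

lemma two_le_card_finite_field: "2 \<le> CARD('a::{field,finite})"
  using card_mono[of UNIV "{0::'a, 1}"] by simp

lemma generator_power_eq_one_imp_dvd:
  fixes g :: "'a::{field,finite}"
  assumes gen: "\<And>x. x \<noteq> 0 \<Longrightarrow> \<exists>i. x = g ^ i" and "g ^ j = 1"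
  shows "CARD('a) - 1 dvd j"
proof (rule ccontr)
  define n where "n = CARD('a) - 1"
  define r where "r = j mod n"
  assume "\<not> CARD('a) - 1 dvd j"
  then have r_pos: "0 < r" and r_less: "r < n"
    using two_le_card_finite_field[where 'a='a] by (auto simp: r_def n_def dvd_eq_mod_eq_0 gr0I)
  have "g \<noteq> 0"
    using \<open>g ^ j = 1\<close> r_pos by (auto simp: r_def power_0_left split: if_splits)
  then have "g ^ n = 1"
    unfolding n_def by (rule power_card_minus_one_eq_one)
  have "g ^ j = (g ^ n) ^ (j div n) * g ^ r"
    unfolding r_def by (simp flip: power_mult power_add)
  then have "g ^ r = 1"
    using \<open>g ^ j = 1\<close> \<open>g ^ n = 1\<close> by simp
  have power_mod: "g ^ i = g ^ (i mod r)" for i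
  proof -
    have "g ^ i = (g ^ r) ^ (i div r) * g ^ (i mod r)"
      by (simp flip: power_mult power_add)
    then show ?thesis
      using \<open>g ^ r = 1\<close> by simp
  qed
  have "UNIV - {0} \<subseteq> (\<lambda>i. g ^ i) ` {..<r}"
  proof
    fix x :: 'a
    assume "x \<in> UNIV - {0}"
    then obtain i where "x = g ^ (i mod r)"
      using gen power_mod by blast
    then show "x \<in> (\<lambda>i. g ^ i) ` {..<r}"
      using r_pos by simp
  qed
  then have "card (UNIV - {0::'a}) \<le> card ((\<lambda>i. g ^ i) ` {..<r})"
    by (intro card_mono) simp_all
  also have "\<dots> \<le> r"
    using card_image_le[of "{..<r}" "\<lambda>i. g ^ i"] by simp
  finally have "card (UNIV - {0::'a}) \<le> r" .
  then show False
    using r_less by (simp add: n_def card_Diff_singleton)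
qed

lemma cubic_diff_factor:
  fixes s s0 :: "'a::comm_ring_1"
  shows "4 * s ^ 3 + 3 * s - (4 * s0 ^ 3 + 3 * s0)
    = (s - s0) * ((2 * s + s0)\<^sup>2 + 3 * (s0\<^sup>2 + 1))"
  by (simp add: algebra_simps power2_eq_square power3_eq_cube)

lemma cubic_discriminant_factor:
  fixes s :: "'a::comm_ring_1"
  shows "(4 * s ^ 3 + 3 * s)\<^sup>2 + 1 = (s\<^sup>2 + 1) * (4 * s\<^sup>2 + 1)\<^sup>2"
  by (simp add: algebra_simps power2_eq_square power3_eq_cube)

lemma cubic_roots_eq:
  fixes s0 g c :: "'a::field"
  assumes "(2::'a) \<noteq> 0" and "4 * s0 ^ 3 + 3 * s0 = c" and "g\<^sup>2 = -3 * (s0\<^sup>2 + 1)"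
  shows "{s. 4 * s ^ 3 + 3 * s = c} = {s0, (g - s0) / 2, (- g - s0) / 2}"
proof -
  have "4 * s ^ 3 + 3 * s = c \<longleftrightarrow> s = s0 \<or> 2 * s + s0 = g \<or> 2 * s + s0 = - g" for s
  proof -
    have "(2 * s + s0 - g) * (2 * s + s0 + g) = (2 * s + s0)\<^sup>2 - g\<^sup>2"
      by (simp add: algebra_simps power2_eq_square)
    also have "\<dots> = (2 * s + s0)\<^sup>2 + 3 * (s0\<^sup>2 + 1)"
      using assms(3) by simp
    finally have "4 * s ^ 3 + 3 * s - c = (s - s0) * ((2 * s + s0 - g) * (2 * s + s0 + g))"
      using cubic_diff_factor[of s s0] assms(2) by simp
    then have "4 * s ^ 3 + 3 * s = c \<longleftrightarrow> (s - s0) * ((2 * s + s0 - g) * (2 * s + s0 + g)) = 0"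
      by (metis right_minus_eq)
    then show ?thesis
      by (simp add: eq_neg_iff_add_eq_0 add.commute)
  qed
  moreover have "s = (g - s0) / 2 \<longleftrightarrow> 2 * s + s0 = g"
    and "s = (- g - s0) / 2 \<longleftrightarrow> 2 * s + s0 = - g" for s
    using assms(1) by (auto simp: eq_divide_eq algebra_simps)
  ultimately show ?thesis
    by blast
qed

lemma distinct_cubic_roots_iff:
  fixes s0 g c :: "'a::field"
  assumes "(2::'a) \<noteq> 0" "(3::'a) \<noteq> 0"
    and "4 * s0 ^ 3 + 3 * s0 = c" and "g\<^sup>2 = -3 * (s0\<^sup>2 + 1)"
  shows "distinct [s0, (g - s0) / 2, (- g - s0) / 2] \<longleftrightarrow> c\<^sup>2 + 1 \<noteq> 0"
proof -
  have "distinct [s0, (g - s0) / 2, (- g - s0) / 2]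
      \<longleftrightarrow> g \<noteq> 0 \<and> \<not> (g = 3 * s0 \<or> g = - (3 * s0))"
    using assms(1) by (auto simp: field_simps)
  also have "g = 3 * s0 \<or> g = - (3 * s0) \<longleftrightarrow> g\<^sup>2 = (3 * s0)\<^sup>2"
    by (rule power2_eq_iff[symmetric])
  also have "g \<noteq> 0 \<longleftrightarrow> g\<^sup>2 \<noteq> 0"
    by simp
  also have "g\<^sup>2 \<noteq> 0 \<longleftrightarrow> s0\<^sup>2 + 1 \<noteq> 0"
    unfolding assms(4) using assms(2) by (simp only: mult_eq_0_iff neg_equal_0_iff_equal simp_thms)
  also have "g\<^sup>2 = (3 * s0)\<^sup>2 \<longleftrightarrow> -3 * (4 * s0\<^sup>2 + 1) = 0"
  proof -
    have "g\<^sup>2 - (3 * s0)\<^sup>2 = -3 * (4 * s0\<^sup>2 + 1)"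
      using assms(4) by (simp add: algebra_simps power2_eq_square)
    then show ?thesis
      by (metis right_minus_eq)
  qed
  also have "-3 * (4 * s0\<^sup>2 + 1) = 0 \<longleftrightarrow> 4 * s0\<^sup>2 + 1 = 0"
    using assms(2) by (simp only: mult_eq_0_iff neg_equal_0_iff_equal simp_thms)
  also have "s0\<^sup>2 + 1 \<noteq> 0 \<and> \<not> 4 * s0\<^sup>2 + 1 = 0 \<longleftrightarrow> c\<^sup>2 + 1 \<noteq> 0"
    using cubic_discriminant_factor[of s0] assms(3) by simp
  finally show ?thesis .
qed

lemma shifted_cubic_sum:
  fixes a s h :: "'a::comm_ring_1"
  assumes "2 * h = 1"
  shows "(a + h) * (s + h)\<^sup>2 + (a - h) * (s - h)\<^sup>2 = h * (4 * a * s\<^sup>2 + a + 2 * s)"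
proof -
  have "(a + h) * (s + h)\<^sup>2 + (a - h) * (s - h)\<^sup>2 - h * (4 * a * s\<^sup>2 + a + 2 * s)
      = (2 * h - 1) * (a * h + 2 * h * s - 2 * a * s\<^sup>2)"
    by (simp add: algebra_simps power2_eq_square)
  then show ?thesis
    using assms by simp
qed

lemma shifted_cubic_diff:
  fixes a s h :: "'a::comm_ring_1"
  assumes "2 * h = 1"
  shows "(a + h) * (s + h)\<^sup>2 - (a - h) * (s - h)\<^sup>2 = 2 * a * s + s\<^sup>2 + h\<^sup>2"
proof -
  have "(a + h) * (s + h)\<^sup>2 - (a - h) * (s - h)\<^sup>2 - (2 * a * s + s\<^sup>2 + h\<^sup>2)
      = (2 * h - 1) * (2 * a * s + s\<^sup>2 + h\<^sup>2)"
    by (simp add: algebra_simps power2_eq_square)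
  then show ?thesis
    using assms by simp
qed

lemma add_halves: "(2::'a::field) \<noteq> 0 \<Longrightarrow> z / 2 + z / 2 = (z::'a)"
  by (simp flip: add_divide_distrib mult_2)

lemma diffs_eq_half_iff:
  fixes a1 a2 b1 b2 c :: "'a::field"
  assumes "(2::'a) \<noteq> 0"
  shows "(a1 - b1 = c / 2 \<and> a2 - b2 = c / 2)
    \<longleftrightarrow> (a2 - a1 = b2 - b1 \<and> (a2 + a1) - (b2 + b1) = c)"
proof
  assume *: "a1 - b1 = c / 2 \<and> a2 - b2 = c / 2"
  then have "a1 - b1 = a2 - b2"
    by metis
  then have "a2 - a1 = b2 - b1"
    by (simp add: algebra_simps)
  moreover have "(a2 + a1) - (b2 + b1) = (a1 - b1) + (a2 - b2)"
    by (simp add: algebra_simps)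
  ultimately show "a2 - a1 = b2 - b1 \<and> (a2 + a1) - (b2 + b1) = c"
    using * add_halves[OF assms, of c] by simp
next
  assume *: "a2 - a1 = b2 - b1 \<and> (a2 + a1) - (b2 + b1) = c"
  then have "a2 - b2 = a1 - b1"
    by (simp add: algebra_simps)
  moreover have "c = (a1 - b1) + (a2 - b2)"
    using * by (simp add: algebra_simps)
  ultimately have "c = 2 * (a1 - b1)"
    by (metis mult_2)
  then show "a1 - b1 = c / 2 \<and> a2 - b2 = c / 2"
    using \<open>a2 - b2 = a1 - b1\<close> assms by simp
qed

lemma cube_add_three_mult_diff_inverse:
  fixes v w :: "'a::comm_ring_1"
  assumes "v * w = 1"
  shows "(v - w) ^ 3 + 3 * (v - w) = v ^ 3 - w ^ 3"
proof -
  have "(v - w) ^ 3 + 3 * (v - w) = v ^ 3 - w ^ 3 + 3 * (v - w) * (1 - v * w)"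
    by (simp add: algebra_simps power2_eq_square power3_eq_cube)
  then show ?thesis
    using assms by simp
qed

lemma square_minus_one_eq: "n\<^sup>2 - 1 = (n + 1) * (n - 1 :: nat)"
  by (cases n) (simp_all add: power2_eq_square)

lemma frobenius_add:
  fixes x y :: "'a::{field,finite}"
  assumes "prime p" and "CARD('a) = p ^ n" and "q = p ^ m"
  shows "(x + y) ^ q = x ^ q + y ^ q"
proof -
  have char_prime: "prime CHAR('a)"
    by (simp add: finite_imp_CHAR_pos prime_CHAR_semidom)
  moreover have "CHAR('a) dvd p ^ n"
    using CHAR_dvd_CARD[where 'a='a] assms(2) by simp
  ultimately have "CHAR('a) = p"
    using assms(1) by (metis prime_dvd_power primes_dvd_imp_eq)
  then show ?thesis
    using char_prime assms(3) by (intro freshmans_dream') simp_all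
qed

context
  fixes q :: nat
  assumes card_eq: "CARD('a::{field,finite}) = q\<^sup>2"
    and q_mod_6: "q mod 6 = 1"
    and power_q_add [simp]: "\<And>x y :: 'a. (x + y) ^ q = x ^ q + y ^ q"
begin

lemma q_gt_1: "1 < q"
proof -
  have "2 \<le> q\<^sup>2"
    using two_le_card_finite_field[where 'a='a] card_eq by simp
  moreover have "q\<^sup>2 \<le> 1" if "q \<le> 1"
    using that power_mono[of q 1 2] by simp
  ultimately show ?thesis
    by linarith
qed

lemma odd_q: "odd q"
  using q_mod_6 by presburger

lemma of_nat_neq_zero_if_coprime:
  assumes "coprime n q"
  shows "(of_nat n :: 'a) \<noteq> 0"
proof
  assume "(of_nat n :: 'a) = 0"
  then have "CHAR('a) dvd n"
    by (simp add: of_nat_eq_0_iff_char_dvd)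
  moreover have char_prime: "prime CHAR('a)"
    by (simp add: finite_imp_CHAR_pos prime_CHAR_semidom)
  moreover have "CHAR('a) dvd q"
    using CHAR_dvd_CARD[where 'a='a] char_prime card_eq prime_dvd_power by auto
  ultimately show False
    using assms by (metis coprime_common_divisor not_prime_unit)
qed

lemma two_neq_zero: "(2::'a) \<noteq> 0"
  using of_nat_neq_zero_if_coprime[of 2] odd_q by simp

lemma three_neq_zero: "(3::'a) \<noteq> 0"
proof -
  have "\<not> 3 dvd q"
    using q_mod_6 by presburger
  then have "coprime 3 q"
    by (simp add: prime_imp_coprime_nat)
  then show ?thesis
    using of_nat_neq_zero_if_coprime[of 3] by simp
qed

lemma power_q_power_q [simp]: "(x ^ q) ^ q = (x :: 'a)"
  using finite_field_power_card[of x] by (simp add: card_eq power2_eq_square flip: power_mult)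

lemma power_q_minus [simp]: "(- x) ^ q = - (x ^ q :: 'a)"
  using odd_q by (rule power_minus_odd)

lemma power_q_diff [simp]: "(x - y) ^ q = x ^ q - (y ^ q :: 'a)"
  using power_q_add[of x "- y"] by simp

lemma power_q_square [simp]: "(x\<^sup>2) ^ q = (x ^ q :: 'a)\<^sup>2"
  by (simp add: power2_eq_square power_mult_distrib)

lemma power_q_of_nat [simp]: "(of_nat n :: 'a) ^ q = of_nat n"
  using q_gt_1 by (induction n) simp_all

lemma power_q_numeral [simp]: "(numeral n :: 'a) ^ q = numeral n"
  using power_q_of_nat[of "numeral n"] by simp

lemma power_q_eq_self_if_cube_eq_one:
  assumes "r ^ 3 = (1::'a)"
  shows "r ^ q = r"
proof -
  have "q = 3 * (q div 3) + 1"
    using q_mod_6 by presburger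
  then obtain k where "q = 3 * k + 1" ..
  then show ?thesis
    using assms by (simp add: power_add power_mult)
qed

lemma exists_primitive_cube_root_of_unity:
  obtains r :: 'a where "r ^ 3 = 1" and "r \<noteq> 1"
proof -
  obtain g :: 'a where "g \<noteq> 0" and gen: "\<And>x. x \<noteq> 0 \<Longrightarrow> \<exists>i. x = g ^ i"
    using finite_field_has_generator by blast
  define n where "n = CARD('a) - 1"
  have "3 dvd q - 1"
    using q_mod_6 by presburger
  then have "3 dvd n"
    unfolding n_def card_eq square_minus_one_eq by simp
  have "(g ^ (n div 3)) ^ 3 = g ^ n"
    using \<open>3 dvd n\<close> by (simp flip: power_mult)
  also have "\<dots> = 1"
    unfolding n_def using \<open>g \<noteq> 0\<close> by (rule power_card_minus_one_eq_one)
  finally have "(g ^ (n div 3)) ^ 3 = 1" .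
  moreover have "g ^ (n div 3) \<noteq> 1"
  proof
    assume "g ^ (n div 3) = 1"
    then have "n dvd n div 3"
      unfolding n_def using generator_power_eq_one_imp_dvd[OF gen] by blast
    moreover have "0 < n div 3" "n div 3 < n"
      using \<open>3 dvd n\<close> two_le_card_finite_field[where 'a='a] unfolding n_def by auto
    ultimately show False
      by (auto dest: dvd_imp_le)
  qed
  ultimately show ?thesis
    by (rule that)
qed

lemma exists_fixed_sqrt_minus_three:
  obtains w :: 'a where "w ^ q = w" and "w\<^sup>2 = -3"
proof -
  obtain r :: 'a where "r ^ 3 = 1" and "r \<noteq> 1"
    by (rule exists_primitive_cube_root_of_unity)
  have "(r - 1) * (r\<^sup>2 + r + 1) = r ^ 3 - 1"
    by (simp add: algebra_simps power2_eq_square power3_eq_cube)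
  then have "r\<^sup>2 + r + 1 = 0"
    using \<open>r ^ 3 = 1\<close> \<open>r \<noteq> 1\<close> by simp
  moreover have "(2 * r + 1)\<^sup>2 = 4 * (r\<^sup>2 + r + 1) - 3"
    by (simp add: algebra_simps power2_eq_square)
  ultimately have "(2 * r + 1)\<^sup>2 = -3"
    by simp
  moreover have "(2 * r + 1) ^ q = 2 * r + 1"
    using power_q_eq_self_if_cube_eq_one[OF \<open>r ^ 3 = 1\<close>] by simp
  ultimately show ?thesis
    using that by blast
qed

lemma exists_sqrt_of_fixed:
  assumes "d ^ q = (d::'a)"
  obtains e where "e\<^sup>2 = d"
proof (cases "d = 0")
  case False
  obtain g :: 'a where "g \<noteq> 0" and gen: "\<And>x. x \<noteq> 0 \<Longrightarrow> \<exists>i. x = g ^ i"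
    using finite_field_has_generator by blast
  obtain i where d_eq: "d = g ^ i"
    using gen[OF False] by blast
  have "d ^ (q - 1) * d = d"
    using assms q_gt_1 by (simp flip: power_Suc2)
  then have "d ^ (q - 1) = 1"
    using False by simp
  then have "g ^ (i * (q - 1)) = 1"
    by (simp add: d_eq power_mult)
  then have "(q + 1) * (q - 1) dvd i * (q - 1)"
    using generator_power_eq_one_imp_dvd[OF gen] unfolding card_eq square_minus_one_eq by blast
  then have "q + 1 dvd i"
    using q_gt_1 dvd_times_right_cancel_iff[of "q - 1" "q + 1" i] by simp
  then have "2 dvd i"
    using odd_q by (metis dvd_trans even_plus_one_iff)
  then have "(g ^ (i div 2))\<^sup>2 = d"
    by (simp add: d_eq flip: power_mult)
  then show ?thesis
    by (rule that)
qed (use that in auto)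

lemma power_q_eq_self_or_neg:
  assumes "(d\<^sup>2) ^ q = (d\<^sup>2 :: 'a)"
  shows "d ^ q = d \<or> d ^ q = - d"
proof -
  have "(d ^ q)\<^sup>2 = d\<^sup>2"
    using assms by simp
  then show ?thesis
    by (simp add: power2_eq_iff)
qed

(* Sol c parametrises the pairs (s - 1/2, - s - 1/2) counted by beta_f(1, c/2). *)
definition Sol :: "'a \<Rightarrow> 'a set" where
  "Sol c = {s. 4 * s ^ q * s\<^sup>2 + s ^ q + 2 * s = c}"

lemma power_q_plus_two_shift_half:
  "(s + 1/2) ^ (q + 2) = (s ^ q + 1/2) * (s + 1/2)\<^sup>2"
  "(s - 1/2) ^ (q + 2) = (s ^ q - 1/2) * (s - (1/2 :: 'a))\<^sup>2"
proof -
  have "(1/2 :: 'a) ^ q = 1/2"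
    by (simp add: power_divide)
  then show "(s + 1/2) ^ (q + 2) = (s ^ q + 1/2) * (s + 1/2)\<^sup>2"
    and "(s - 1/2) ^ (q + 2) = (s ^ q - 1/2) * (s - (1/2 :: 'a))\<^sup>2"
    by (simp_all only: power_add power_q_add power_q_diff)
qed

lemma power_q_plus_two_add:
  "(s + 1/2) ^ (q + 2) + (s - 1/2) ^ (q + 2) = (4 * s ^ q * s\<^sup>2 + s ^ q + 2 * s :: 'a) / 2"
  unfolding power_q_plus_two_shift_half using shifted_cubic_sum[of "1/2" "s ^ q" s] two_neq_zero by simp

lemma power_q_plus_two_diff:
  "(s + 1/2) ^ (q + 2) - (s - 1/2) ^ (q + 2) = 2 * s ^ q * s + s\<^sup>2 + ((1/2)\<^sup>2 :: 'a)"
  unfolding power_q_plus_two_shift_half using shifted_cubic_diff[of "1/2" "s ^ q" s] two_neq_zero by simp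

(* Such an r would be a primitive cube root of unity, hence fixed, forcing r = -1/2. *)
lemma trace_neq_minus_one_if_norm_one:
  assumes "r * r ^ q = (1::'a)"
  shows "r + r ^ q \<noteq> -1"
proof
  assume r_sum: "r + r ^ q = -1"
  have "r\<^sup>2 + r + 1 = r * (r + r ^ q + 1)"
    using assms by (simp add: algebra_simps power2_eq_square)
  then have r_quadratic: "r\<^sup>2 + r + 1 = 0"
    using r_sum by simp
  have "r ^ 3 - 1 = (r - 1) * (r\<^sup>2 + r + 1)"
    by (simp add: algebra_simps power2_eq_square power3_eq_cube)
  then have "r ^ q = r"
    using r_quadratic by (intro power_q_eq_self_if_cube_eq_one) simp
  then have "2 * r = -1" and "r * r = 1"
    using r_sum assms by simp_all
  have "(4::'a) = 4 * (r * r)"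
    using \<open>r * r = 1\<close> by simp
  also have "\<dots> = (2 * r) * (2 * r)"
    by (simp add: algebra_simps)
  also have "\<dots> = 1"
    using \<open>2 * r = -1\<close> by simp
  finally have "(3::'a) + 1 = 0 + 1"
    by simp
  then have "(3::'a) = 0"
    by (simp only: add_right_cancel)
  then show False
    using three_neq_zero by simp
qed

lemma cross_trace_eq_zero_imp_mult_eq_zero:
  assumes "w ^ q * u + u ^ q * w + u * w = (0::'a)"
  shows "u * w = 0"
proof (rule ccontr)
  define A where "A = w ^ q * u"
  define P where "P = u * w"
  assume "u * w \<noteq> 0"
  then have "P \<noteq> 0"
    by (simp add: P_def)
  have A_conj: "A ^ q = u ^ q * w"
    by (simp add: A_def power_mult_distrib)
  have trace: "A + A ^ q + P = 0"
    unfolding A_conj unfolding A_def P_def by (rule assms)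
  then have sum: "A + A ^ q = - P"
    by (simp add: eq_neg_iff_add_eq_0)
  have "(A + A ^ q + P) ^ q = 0"
    using trace q_gt_1 by simp
  then have "P ^ q = - (A + A ^ q)"
    by (metis add.commute eq_neg_iff_add_eq_0 power_q_add power_q_power_q)
  then have P_conj: "P ^ q = P"
    using sum by simp
  have prod: "A * A ^ q = P\<^sup>2"
    using P_conj by (simp add: A_conj A_def P_def power2_eq_square algebra_simps)
  define r where "r = A / P"
  have r_conj: "r ^ q = A ^ q / P"
    unfolding r_def power_divide P_conj ..
  have "r + r ^ q = (A + A ^ q) / P"
    unfolding r_conj by (simp add: r_def add_divide_distrib)
  then have r_trace: "r + r ^ q = -1"
    using sum \<open>P \<noteq> 0\<close> by simp
  have "r * r ^ q = (A * A ^ q) / P\<^sup>2"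
    unfolding r_conj by (simp add: r_def power2_eq_square)
  then have "r * r ^ q = 1"
    using prod \<open>P \<noteq> 0\<close> by simp
  then show False
    using trace_neq_minus_one_if_norm_one r_trace by blast
qed

lemma twice_norm_add_square_eq_iff:
  "2 * s ^ q * s + s\<^sup>2 = 2 * t ^ q * t + t\<^sup>2 \<longleftrightarrow> t = s \<or> t = - (s::'a)"
proof
  assume "2 * s ^ q * s + s\<^sup>2 = 2 * t ^ q * t + t\<^sup>2"
  then have "(s + t) ^ q * (s - t) + (s - t) ^ q * (s + t) + (s - t) * (s + t) = 0"
    by (simp add: algebra_simps power2_eq_square)
  then have "(s - t) * (s + t) = 0"
    by (rule cross_trace_eq_zero_imp_mult_eq_zero)
  then show "t = s \<or> t = - s"
    by (auto simp: eq_neg_iff_add_eq_0 add.commute)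
qed auto

lemma pair_condition_iff:
  assumes "c \<noteq> 0"
  shows "x ^ (q + 2) - y ^ (q + 2) = c / 2 \<and> (x + 1) ^ (q + 2) - (y + 1) ^ (q + 2) = c / 2
    \<longleftrightarrow> (\<exists>s \<in> Sol c. x = s - 1/2 \<and> y = - s - 1/2)"
proof -
  define s t :: 'a where "s = x + 1/2" and "t = y + 1/2"
  define S where "S z = 4 * z ^ q * z\<^sup>2 + z ^ q + 2 * z" for z :: 'a
  have "1/2 + 1/2 = (1::'a)"
    using add_halves[OF two_neq_zero] by simp
  then have shift: "x = s - 1/2" "x + 1 = s + 1/2" "y = t - 1/2" "y + 1 = t + 1/2"
    by (simp_all add: s_def t_def add.assoc)
  have S_neg: "S (- z) = - S z" for z
    by (simp add: S_def)
  have "x ^ (q + 2) - y ^ (q + 2) = c / 2 \<and> (x + 1) ^ (q + 2) - (y + 1) ^ (q + 2) = c / 2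
      \<longleftrightarrow> (s + 1/2) ^ (q + 2) - (s - 1/2) ^ (q + 2) = (t + 1/2) ^ (q + 2) - (t - 1/2) ^ (q + 2)
        \<and> ((s + 1/2) ^ (q + 2) + (s - 1/2) ^ (q + 2)) - ((t + 1/2) ^ (q + 2) + (t - 1/2) ^ (q + 2)) = c"
    unfolding shift(2,4) unfolding shift(1,3) by (rule diffs_eq_half_iff[OF two_neq_zero])
  also have "\<dots> \<longleftrightarrow> (t = s \<or> t = - s) \<and> S s / 2 - S t / 2 = c"
    unfolding power_q_plus_two_add power_q_plus_two_diff add_right_cancel
      twice_norm_add_square_eq_iff S_def ..
  also have "\<dots> \<longleftrightarrow> t = - s \<and> S s = c"
    using assms add_halves[OF two_neq_zero] S_neg by (cases "t = - s") auto
  also have "\<dots> \<longleftrightarrow> (\<exists>s' \<in> Sol c. x = s' - 1/2 \<and> y = - s' - 1/2)"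
    unfolding Sol_def S_def using shift(1,3) by auto
  finally show ?thesis .
qed

lemma card_pairs_eq_card_Sol:
  assumes "c \<noteq> 0"
  shows "card {(x, y). x ^ (q + 2) - y ^ (q + 2) = c / 2 \<and> (x + 1) ^ (q + 2) - (y + 1) ^ (q + 2) = c / 2}
    = card (Sol c)"
proof -
  have "{(x, y). x ^ (q + 2) - y ^ (q + 2) = c / 2 \<and> (x + 1) ^ (q + 2) - (y + 1) ^ (q + 2) = c / 2}
      = (\<lambda>s. (s - 1/2, - s - 1/2)) ` Sol c"
    unfolding pair_condition_iff[OF assms] by auto
  also have "card \<dots> = card (Sol c)"
    by (rule card_image) (auto intro: inj_onI)
  finally show ?thesis .
qed

lemma beta_eq_card_Sol:
  assumes "c \<noteq> 0"
  shows "beta_f (\<lambda>x. x ^ (q + 2)) 1 (2 * c / 4) = card (Sol c)"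
proof -
  have "2 * c / 4 = (2 * c) / (2 * (2::'a))"
    by simp
  also have "\<dots> = c / 2"
    using two_neq_zero by (rule nonzero_mult_divide_mult_cancel_left)
  finally show ?thesis
    unfolding beta_f_def by (simp only: card_pairs_eq_card_Sol[OF assms])
qed

lemma square_eq_if_mem_Sol_not_fixed:
  assumes "c ^ q = c" and "s \<in> Sol c" and "s ^ q \<noteq> s"
  shows "(2 * s - c)\<^sup>2 = c\<^sup>2 + 1"
proof -
  have eq: "4 * s ^ q * s\<^sup>2 + s ^ q + 2 * s = c"
    using assms(2) by (simp add: Sol_def)
  then have "(4 * s ^ q * s\<^sup>2 + s ^ q + 2 * s) ^ q = c"
    using assms(1) by simp
  then have eq_conj: "4 * s * (s ^ q)\<^sup>2 + s + 2 * s ^ q = c"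
    by (simp add: algebra_simps)
  have "(s - s ^ q) * (4 * s * s ^ q + 1)
      = (4 * s ^ q * s\<^sup>2 + s ^ q + 2 * s) - (4 * s * (s ^ q)\<^sup>2 + s + 2 * s ^ q)"
    by (simp add: algebra_simps power2_eq_square)
  also have "\<dots> = 0"
    using eq eq_conj by simp
  finally have norm: "4 * s * s ^ q = -1"
    using assms(3) by (simp add: eq_neg_iff_add_eq_0)
  have "4 * s ^ q * s\<^sup>2 + s ^ q + 2 * s = s * (4 * s * s ^ q + 1) + (s + s ^ q)"
    by (simp add: algebra_simps power2_eq_square)
  then have "s + s ^ q = c"
    using eq norm by simp
  then have "(2 * s - c)\<^sup>2 = c\<^sup>2 - 4 * s * s ^ q"
    by (auto simp: algebra_simps power2_eq_square)
  then show ?thesis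
    using norm by simp
qed

lemma mem_Sol_if_not_fixed:
  assumes "c ^ q = c" and "s ^ q \<noteq> s" and "(2 * s - c)\<^sup>2 = c\<^sup>2 + 1"
  shows "s \<in> Sol c"
proof -
  have "((2 * s - c)\<^sup>2) ^ q = (2 * s - c)\<^sup>2"
    using assms(1,3) by simp
  then have "(2 * s - c) ^ q = - (2 * s - c)"
    using assms(1,2) two_neq_zero power_q_eq_self_or_neg[of "2 * s - c"] by auto
  then have "2 * s ^ q = 2 * (c - s)"
    using assms(1) by (simp add: algebra_simps)
  then have conj: "s ^ q = c - s"
    using two_neq_zero mult_left_cancel by blast
  have "4 * s * (c - s) = c\<^sup>2 - (2 * s - c)\<^sup>2"
    by (simp add: algebra_simps power2_eq_square)
  then have "4 * s * s ^ q = -1"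
    using assms(3) conj by simp
  moreover have "4 * s ^ q * s\<^sup>2 + s ^ q + 2 * s = s * (4 * s * s ^ q + 1) + (s + s ^ q)"
    by (simp add: algebra_simps power2_eq_square)
  ultimately show ?thesis
    unfolding Sol_def using conj by simp
qed

lemma mem_Sol_iff:
  assumes "c ^ q = c"
  shows "s \<in> Sol c \<longleftrightarrow>
    (s ^ q = s \<and> 4 * s ^ 3 + 3 * s = c) \<or> (s ^ q \<noteq> s \<and> (2 * s - c)\<^sup>2 = c\<^sup>2 + 1)"
proof (cases "s ^ q = s")
  case True
  then show ?thesis
    by (simp add: Sol_def algebra_simps power2_eq_square power3_eq_cube)
next
  case False
  then show ?thesis
    using square_eq_if_mem_Sol_not_fixed[OF assms] mem_Sol_if_not_fixed[OF assms] by blast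
qed

lemma Sol_eq_if_fixed_sqrt:
  assumes "c ^ q = c" and "d ^ q = d" and "d\<^sup>2 = c\<^sup>2 + 1"
  shows "Sol c = {s. s ^ q = s \<and> 4 * s ^ 3 + 3 * s = c}"
proof -
  have "s ^ q = s" if "(2 * s - c)\<^sup>2 = c\<^sup>2 + 1" for s
  proof -
    have "2 * s - c = d \<or> 2 * s - c = - d"
      using that assms(3) power2_eq_iff[of "2 * s - c" d] by simp
    then have "(2 * s - c) ^ q = 2 * s - c"
      using assms(2) power_q_minus[of d] by metis
    then have "2 * s ^ q = 2 * s"
      using assms(1) by simp
    then show ?thesis
      using two_neq_zero mult_left_cancel by blast
  qed
  then show ?thesis
    using mem_Sol_iff[OF assms(1)] by blast
qed

lemma Sol_eq_roots_if_fixed_sqrt: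
  assumes "c ^ q = c" and "d ^ q = d" and "d\<^sup>2 = c\<^sup>2 + 1"
    and "s0 \<in> Sol c" and "g\<^sup>2 = -3 * (s0\<^sup>2 + 1)"
  shows "Sol c = {s0, (g - s0) / 2, (- g - s0) / 2} \<inter> {s. s ^ q = s}"
proof -
  have "4 * s0 ^ 3 + 3 * s0 = c"
    using assms(4) Sol_eq_if_fixed_sqrt[OF assms(1-3)] by auto
  then show ?thesis
    using Sol_eq_if_fixed_sqrt[OF assms(1-3)] cubic_roots_eq[OF two_neq_zero _ assms(5)] by blast
qed

lemma card_Sol_if_fixed_sqrt:
  assumes "c ^ q = c" and "d ^ q = d" and "d\<^sup>2 = c\<^sup>2 + 1" and "c\<^sup>2 + 1 \<noteq> 0"
  shows "card (Sol c) \<in> {0, 3}"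
proof (cases "Sol c = {}")
  case False
  then obtain s0 where "s0 \<in> Sol c"
    by blast
  then have s0: "s0 ^ q = s0" "4 * s0 ^ 3 + 3 * s0 = c"
    using Sol_eq_if_fixed_sqrt[OF assms(1-3)] by auto
  obtain w :: 'a where w: "w ^ q = w" "w\<^sup>2 = -3"
    by (rule exists_fixed_sqrt_minus_three)
  define k where "k = 4 * s0\<^sup>2 + 1"
  have d_eq: "d\<^sup>2 = (s0\<^sup>2 + 1) * k\<^sup>2"
    using assms(3) cubic_discriminant_factor[of s0] s0(2) by (simp add: k_def)
  then have "k \<noteq> 0"
    using assms(3,4) by auto
  define g where "g = w * d / k"
  have g_sq: "g\<^sup>2 = -3 * (s0\<^sup>2 + 1)"
    using w(2) d_eq \<open>k \<noteq> 0\<close> by (simp add: g_def power_mult_distrib power_divide)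
  have g_fixed: "g ^ q = g"
    using w(1) assms(2) s0(1) by (simp add: g_def k_def power_mult_distrib power_divide)
  define roots where "roots = [s0, (g - s0) / 2, (- g - s0) / 2]"
  have "set roots \<subseteq> {s. s ^ q = s}"
    using g_fixed s0(1) by (simp add: roots_def power_divide)
  moreover have "Sol c = set roots \<inter> {s. s ^ q = s}"
    unfolding roots_def set_simps by (rule Sol_eq_roots_if_fixed_sqrt[OF assms(1-3) \<open>s0 \<in> Sol c\<close> g_sq])
  ultimately have "Sol c = set roots"
    by blast
  moreover have "distinct roots"
    unfolding roots_def using distinct_cubic_roots_iff[OF two_neq_zero three_neq_zero s0(2) g_sq] assms(4)
    by blast
  moreover have "length roots = 3"
    by (simp add: roots_def)
  ultimately show ?thesis
    by (simp add: distinct_card)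
qed simp

lemma card_Sol_le_two:
  assumes "c ^ q = c" and "c\<^sup>2 + 1 = 0"
  shows "card (Sol c) \<le> 2"
proof (cases "Sol c = {}")
  case False
  then obtain s0 where "s0 \<in> Sol c"
    by blast
  have zero: "0 ^ q = (0::'a)" "0\<^sup>2 = c\<^sup>2 + 1"
    using assms(2) q_gt_1 by simp_all
  have s0: "s0 ^ q = s0" "4 * s0 ^ 3 + 3 * s0 = c"
    using Sol_eq_if_fixed_sqrt[OF assms(1) zero] \<open>s0 \<in> Sol c\<close> by blast+
  have "(-3 * (s0\<^sup>2 + 1)) ^ q = -3 * (s0\<^sup>2 + 1)"
    using s0(1) by (simp add: power_mult_distrib)
  then obtain g where g_sq: "g\<^sup>2 = -3 * (s0\<^sup>2 + 1)"
    by (rule exists_sqrt_of_fixed)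
  define roots where "roots = [s0, (g - s0) / 2, (- g - s0) / 2]"
  have "\<not> distinct roots"
    unfolding roots_def using distinct_cubic_roots_iff[OF two_neq_zero three_neq_zero s0(2) g_sq] assms(2)
    by blast
  then have "card (set roots) \<noteq> length roots"
    using card_distinct by blast
  moreover have "length roots = 3"
    by (simp add: roots_def)
  ultimately have "card (set roots) < 3"
    using card_length[of roots] by linarith
  moreover have "Sol c \<subseteq> set roots"
    unfolding roots_def set_simps using Sol_eq_roots_if_fixed_sqrt[OF assms(1) zero \<open>s0 \<in> Sol c\<close> g_sq]
    by blast
  ultimately show ?thesis
    using card_mono[of "set roots" "Sol c"] by simp
qed simp

lemma exists_cube_root_of_norm_minus_one:
  assumes "V ^ (q + 1) = (-1::'a)"
  obtains v where "v ^ 3 = V" and "v * v ^ q = -1"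
proof
  \<comment> \<open>Since 3 e = 4 (q + 1) + 1, the e-th power inverts cubing on elements of norm -1.\<close>
  define e where "e = (4 * q + 5) div 3"
  have e: "3 * e = 4 * (q + 1) + 1" "odd e"
    using q_mod_6 unfolding e_def by presburger+
  have "(V ^ e) ^ 3 = V ^ ((q + 1) * 4 + 1)"
    unfolding power_mult[symmetric] mult.commute[of e] e(1) by (simp add: mult.commute)
  also have "\<dots> = (V ^ (q + 1)) ^ 4 * V"
    by (simp only: power_add power_mult power_one_right)
  finally show "(V ^ e) ^ 3 = V"
    using assms by simp
  have "(V ^ e) ^ (q + 1) = (V ^ (q + 1)) ^ e"
    unfolding power_mult[symmetric] by (simp add: mult.commute)
  then show "V ^ e * (V ^ e) ^ q = -1"
    using assms e(2) by simp
qed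

lemma exists_fixed_cubic_root:
  assumes "c ^ q = (c::'a)" and "d\<^sup>2 = c\<^sup>2 + 1" and "d ^ q = - d"
  obtains s0 where "s0 ^ q = s0" and "4 * s0 ^ 3 + 3 * s0 = c"
proof -
  define V where "V = c + d"
  have V_conj: "V ^ q = c - d"
    using assms(1,3) by (simp add: V_def)
  have "V ^ q * V = (c - d) * (c + d)"
    by (simp only: V_conj) (simp add: V_def)
  also have "\<dots> = c\<^sup>2 - d\<^sup>2"
    by (simp add: algebra_simps power2_eq_square)
  finally have V_norm: "V ^ (q + 1) = -1"
    using assms(2) by (simp add: mult.commute)
  then have "V \<noteq> 0"
    by auto
  obtain v where v_cube: "v ^ 3 = V" and v_norm: "v * v ^ q = -1"
    using exists_cube_root_of_norm_minus_one[OF V_norm] by blast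
  then have "v \<noteq> 0"
    by auto
  have "v ^ q = (v * v ^ q) / v"
    using \<open>v \<noteq> 0\<close> by simp
  then have v_conj: "v ^ q = - (1 / v)"
    using v_norm by simp
  \<comment> \<open>Cardano's formula; v ^ q = - 1 / v makes s0 fixed.\<close>
  define s0 where "s0 = (v - 1 / v) / 2"
  show ?thesis
  proof
    show "s0 ^ q = s0"
      using v_conj \<open>v \<noteq> 0\<close> by (simp add: s0_def power_divide)
    have "4 * s0 ^ 3 + 3 * s0 = ((2 * s0) ^ 3 + 3 * (2 * s0)) / 2"
      using two_neq_zero by (simp add: field_simps power3_eq_cube)
    also have "2 * s0 = v - 1 / v"
      using two_neq_zero by (simp add: s0_def)
    also have "(v - 1 / v) ^ 3 + 3 * (v - 1 / v) = v ^ 3 - (1 / v) ^ 3"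
      using \<open>v \<noteq> 0\<close> by (intro cube_add_three_mult_diff_inverse) simp
    also have "(1 / v) ^ 3 = - (V ^ q)"
      using v_cube V_norm \<open>V \<noteq> 0\<close> by (simp add: field_simps)
    also have "v ^ 3 - - (V ^ q) = 2 * c"
      by (simp only: v_cube V_conj) (simp add: V_def)
    finally show "4 * s0 ^ 3 + 3 * s0 = c"
      using two_neq_zero by simp
  qed
qed

lemma fixed_cubic_root_unique:
  assumes nonsquare: "\<not> (\<exists>d. d ^ q = d \<and> d\<^sup>2 = c\<^sup>2 + 1)"
    and "s0 ^ q = s0" and "4 * s0 ^ 3 + 3 * s0 = c"
    and "s ^ q = s" and "4 * s ^ 3 + 3 * s = (c::'a)"
  shows "s = s0"
proof (rule ccontr)
  assume "s \<noteq> s0"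
  then have "(2 * s + s0)\<^sup>2 + 3 * (s0\<^sup>2 + 1) = 0"
    using cubic_diff_factor[of s s0] assms(3,5) by simp
  then have sq: "(2 * s + s0)\<^sup>2 = -3 * (s0\<^sup>2 + 1)"
    by (simp only: mult_minus_left eq_neg_iff_add_eq_0)
  obtain w :: 'a where w: "w ^ q = w" "w\<^sup>2 = -3"
    by (rule exists_fixed_sqrt_minus_three)
  \<comment> \<open>A fixed square root of c^2 + 1, by the discriminant factorisation.\<close>
  define e where "e = (2 * s + s0) * (4 * s0\<^sup>2 + 1) / w"
  have "e ^ q = e"
    using w(1) assms(2,4) by (simp add: e_def power_mult_distrib power_divide)
  moreover have "e\<^sup>2 = c\<^sup>2 + 1"
  proof -
    have "e\<^sup>2 = (2 * s + s0)\<^sup>2 * (4 * s0\<^sup>2 + 1)\<^sup>2 / w\<^sup>2"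
      by (simp add: e_def power_mult_distrib power_divide)
    also have "\<dots> = -3 * ((s0\<^sup>2 + 1) * (4 * s0\<^sup>2 + 1)\<^sup>2) / -3"
      by (simp only: sq w(2) mult.assoc)
    also have "\<dots> = (s0\<^sup>2 + 1) * (4 * s0\<^sup>2 + 1)\<^sup>2"
      using three_neq_zero by (intro nonzero_mult_div_cancel_left) simp
    finally have "e\<^sup>2 = (s0\<^sup>2 + 1) * (4 * s0\<^sup>2 + 1)\<^sup>2" .
    then show ?thesis
      using cubic_discriminant_factor[of s0] assms(3) by simp
  qed
  ultimately show False
    using nonsquare by blast
qed

lemma half_roots_conj:
  assumes "c ^ q = c" and "d ^ q = - d" and "d \<noteq> (0::'a)"
  shows "((c + d) / 2) ^ q = (c - d) / 2" and "((c - d) / 2) ^ q = (c + d) / 2"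
    and "(c + d) / 2 \<noteq> (c - d) / 2"
proof -
  show "((c + d) / 2) ^ q = (c - d) / 2" "((c - d) / 2) ^ q = (c + d) / 2"
    using assms(1,2) by (simp_all add: power_divide)
  have "c + d \<noteq> c - d"
  proof
    assume "c + d = c - d"
    have "2 * d = (c + d) - (c - d)"
      by (simp add: algebra_simps)
    then have "2 * d = 0"
      using \<open>c + d = c - d\<close> by simp
    then show False
      using assms(3) two_neq_zero by simp
  qed
  then show "(c + d) / 2 \<noteq> (c - d) / 2"
    using two_neq_zero by (subst divide_cancel_right) simp
qed

lemma Sol_eq_if_no_fixed_sqrt:
  assumes "c ^ q = c" and nonsquare: "\<not> (\<exists>d. d ^ q = d \<and> d\<^sup>2 = c\<^sup>2 + 1)"
    and "d\<^sup>2 = c\<^sup>2 + 1" and "d ^ q = - d" and "d \<noteq> 0"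
    and s0: "s0 ^ q = s0" "4 * s0 ^ 3 + 3 * s0 = c"
  shows "Sol c = {s0, (c + d) / 2, (c - d) / 2}"
proof -
  have not_fixed: "((c + d) / 2) ^ q \<noteq> (c + d) / 2" "((c - d) / 2) ^ q \<noteq> (c - d) / 2"
    using half_roots_conj[OF assms(1,4,5)] by auto
  have "s \<in> Sol c \<longleftrightarrow> s = s0 \<or> s = (c + d) / 2 \<or> s = (c - d) / 2" for s
  proof -
    have "(2 * s - c)\<^sup>2 = c\<^sup>2 + 1 \<longleftrightarrow> 2 * s - c = d \<or> 2 * s - c = - d"
      using assms(3) power2_eq_iff[of "2 * s - c" d] by simp
    also have "\<dots> \<longleftrightarrow> s = (c + d) / 2 \<or> s = (c - d) / 2"
      using two_neq_zero by (auto simp: eq_divide_eq algebra_simps)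
    finally show ?thesis
      using mem_Sol_iff[OF assms(1)] fixed_cubic_root_unique[OF nonsquare s0] s0 not_fixed by blast
  qed
  then show ?thesis
    by blast
qed

lemma card_Sol_if_no_fixed_sqrt:
  assumes "c ^ q = c" and nonsquare: "\<not> (\<exists>d. d ^ q = d \<and> d\<^sup>2 = c\<^sup>2 + 1)"
  shows "card (Sol c) = 3"
proof -
  have "(c\<^sup>2 + 1) ^ q = c\<^sup>2 + 1"
    using assms(1) by simp
  then obtain d where d: "d\<^sup>2 = c\<^sup>2 + 1"
    by (rule exists_sqrt_of_fixed)
  have "d ^ q \<noteq> d"
    using nonsquare d by blast
  then have d_conj: "d ^ q = - d"
    using power_q_eq_self_or_neg[of d] d assms(1) by simp
  have "d \<noteq> 0"
    using \<open>d ^ q \<noteq> d\<close> q_gt_1 by (cases "d = 0") simp_all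
  obtain s0 where s0: "s0 ^ q = s0" "4 * s0 ^ 3 + 3 * s0 = c"
    by (rule exists_fixed_cubic_root[OF assms(1) d d_conj])
  have "s0 \<noteq> (c + d) / 2" "s0 \<noteq> (c - d) / 2"
    using half_roots_conj[OF assms(1) d_conj \<open>d \<noteq> 0\<close>] s0(1) by metis+
  then show ?thesis
    using Sol_eq_if_no_fixed_sqrt[OF assms d d_conj \<open>d \<noteq> 0\<close> s0]
      half_roots_conj(3)[OF assms(1) d_conj \<open>d \<noteq> 0\<close>] by simp
qed

end

theorem lemma9:
  fixes p m q :: nat and c :: "'a::{field, finite}"
  assumes "prime p" and "odd p" and "m \<ge> 1" and "q = p ^ m" and "q mod 6 = 1"
    and "CARD('a) = q ^ 2"
    and "c \<in> subfield_q q" and "c \<noteq> 0"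
  defines "f \<equiv> (\<lambda>x::'a. x ^ (q + 2))"
  defines "\<beta> \<equiv> (\<lambda>b::'a. beta_f f 1 (b / 4))"
  shows "(c\<^sup>2 + 1 \<in> C1 q \<longrightarrow> \<beta> (2 * c) = 3)
       \<and> (c\<^sup>2 + 1 \<in> C0 q \<longrightarrow> \<beta> (2 * c) \<in> {0, 3})
       \<and> (c\<^sup>2 + 1 = 0 \<longrightarrow> \<beta> (2 * c) \<in> {0, 1, 2})"
proof -
  \<comment> \<open>The hypotheses odd p and 1 \<le> m are implied by the others and not used.\<close>
  have "CARD('a) = p ^ (2 * m)"
    using assms(4,6) by (simp add: power_mult mult.commute)
  note setting = assms(6,5) frobenius_add[OF assms(1) this assms(4)]
  have c_fixed: "c ^ q = c"
    using assms(7) by (simp add: subfield_q_def)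
  have \<beta>_eq: "\<beta> (2 * c) = card (Sol q c)"
    unfolding \<beta>_def f_def using beta_eq_card_Sol[OF setting assms(8)] by simp
  have "\<beta> (2 * c) = 3" if "c\<^sup>2 + 1 \<in> C1 q"
    using that card_Sol_if_no_fixed_sqrt[OF setting c_fixed] by (simp add: \<beta>_eq C1_def subfield_q_def)
  moreover have "\<beta> (2 * c) \<in> {0, 3}" if square: "c\<^sup>2 + 1 \<in> C0 q"
  proof -
    obtain d where "d ^ q = d" "d\<^sup>2 = c\<^sup>2 + 1" and "c\<^sup>2 + 1 \<noteq> 0"
      using square by (auto simp: C0_def subfield_q_def)
    then show ?thesis
      unfolding \<beta>_eq by (rule card_Sol_if_fixed_sqrt[OF setting c_fixed])
  qed
  moreover have "\<beta> (2 * c) \<in> {0, 1, 2}" if "c\<^sup>2 + 1 = 0"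
    using card_Sol_le_two[OF setting c_fixed that] unfolding \<beta>_eq
    by (simp only: insert_iff singleton_iff empty_iff) presburger
  ultimately show ?thesis
    by blast
qed

end
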